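(* The monoidal category $\mathcal{TL}_0(\Bbbk)$ is not rigid.
   Context: $\Bbbk$ is a field. $\mathcal{TL}_0(\Bbbk)$ is the strict $\Bbbk$-linear monoidal category with objects $\mathbf 0,\mathbf 1,\dots$, $\mathbf m\otimes\mathbf n=\mathbf{m+n}$, unit $\mathbf 0$, whose morphisms are generated under composition, tensor product and linear combination by $\mathrm{cup}:\mathbf 0\to\mathbf 2$ and $\mathrm{cap}:\mathbf 2\to\mathbf 0$ subject to $(\mathrm{id}_{\mathbf 1}\otimes\mathrm{cap})\circ(\mathrm{cup}\otimes\mathrm{id}_{\mathbf 1})=0$, $(\mathrm{cap}\otimes\mathrm{id}_{\mathbf 1})\circ(\mathrm{id}_{\mathbf 1}\otimes\mathrm{cup})=0$ and $\mathrm{cap}\circ\mathrm{cup}=\mathrm{id}_{\mathbf 0}$. A monoidal category is rigid if every object has both a left and a right dual. *)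

theory Defs
  imports Main
begin

text \<open>Objects are natural numbers (m tensor n = m + n, unit 0).
  Morphism expressions are built from identities, cup, cap, composition,
  tensor product and linear combinations; hom-spaces are the typed
  expressions modulo the smallest congruence making the result a strict
  k-linear monoidal category and imposing the three defining relations.\<close>

datatype 'k mor =
    Id nat
  | Cup
  | Cap
  | Comp "'k mor" "'k mor"
  | Tens "'k mor" "'k mor"
  | Zero nat nat
  | Add "'k mor" "'k mor"
  | Smul 'k "'k mor"

text \<open>Comp f g is f after g.
  mtyp f a b : f is a morphism from object a to object b.\<close>
inductive mtyp :: "'k mor \<Rightarrow> nat \<Rightarrow> nat \<Rightarrow> bool" where
  mtyp_Id: "mtyp (Id n) n n"
| mtyp_Cup: "mtyp Cup 0 2"
| mtyp_Cap: "mtyp Cap 2 0"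
| mtyp_Comp: "mtyp g a b \<Longrightarrow> mtyp f b c \<Longrightarrow> mtyp (Comp f g) a c"
| mtyp_Tens: "mtyp f a b \<Longrightarrow> mtyp g c d \<Longrightarrow> mtyp (Tens f g) (a + c) (b + d)"
| mtyp_Zero: "mtyp (Zero a b) a b"
| mtyp_Add: "mtyp f a b \<Longrightarrow> mtyp g a b \<Longrightarrow> mtyp (Add f g) a b"
| mtyp_Smul: "mtyp f a b \<Longrightarrow> mtyp (Smul c f) a b"

inductive tl0_eq :: "'k::field mor \<Rightarrow> 'k mor \<Rightarrow> bool" where
  refl: "mtyp f a b \<Longrightarrow> tl0_eq f f"
| sym: "tl0_eq f g \<Longrightarrow> tl0_eq g f"
| trans: "tl0_eq f g \<Longrightarrow> tl0_eq g h \<Longrightarrow> tl0_eq f h"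
| cong_Comp: "tl0_eq f f' \<Longrightarrow> tl0_eq g g' \<Longrightarrow> mtyp g a b \<Longrightarrow> mtyp f b c
    \<Longrightarrow> tl0_eq (Comp f g) (Comp f' g')"
| cong_Tens: "tl0_eq f f' \<Longrightarrow> tl0_eq g g' \<Longrightarrow> tl0_eq (Tens f g) (Tens f' g')"
| cong_Add: "tl0_eq f f' \<Longrightarrow> tl0_eq g g' \<Longrightarrow> mtyp f a b \<Longrightarrow> mtyp g a b
    \<Longrightarrow> tl0_eq (Add f g) (Add f' g')"
| cong_Smul: "tl0_eq f f' \<Longrightarrow> tl0_eq (Smul c f) (Smul c f')"
| add_assoc: "mtyp f a b \<Longrightarrow> mtyp g a b \<Longrightarrow> mtyp h a b
    \<Longrightarrow> tl0_eq (Add (Add f g) h) (Add f (Add g h))"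
| add_comm: "mtyp f a b \<Longrightarrow> mtyp g a b \<Longrightarrow> tl0_eq (Add f g) (Add g f)"
| add_zero: "mtyp f a b \<Longrightarrow> tl0_eq (Add f (Zero a b)) f"
| add_neg: "mtyp f a b \<Longrightarrow> tl0_eq (Add f (Smul (-1) f)) (Zero a b)"
| smul_add: "mtyp f a b \<Longrightarrow> mtyp g a b \<Longrightarrow> tl0_eq (Smul c (Add f g)) (Add (Smul c f) (Smul c g))"
| add_smul: "mtyp f a b \<Longrightarrow> tl0_eq (Smul (c + d) f) (Add (Smul c f) (Smul d f))"
| smul_smul: "mtyp f a b \<Longrightarrow> tl0_eq (Smul c (Smul d f)) (Smul (c * d) f)"
| smul_one: "mtyp f a b \<Longrightarrow> tl0_eq (Smul 1 f) f"
| comp_add_left: "mtyp f b c \<Longrightarrow> mtyp f' b c \<Longrightarrow> mtyp g a b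
    \<Longrightarrow> tl0_eq (Comp (Add f f') g) (Add (Comp f g) (Comp f' g))"
| comp_add_right: "mtyp f b c \<Longrightarrow> mtyp g a b \<Longrightarrow> mtyp g' a b
    \<Longrightarrow> tl0_eq (Comp f (Add g g')) (Add (Comp f g) (Comp f g'))"
| comp_smul_left: "mtyp f b c \<Longrightarrow> mtyp g a b \<Longrightarrow> tl0_eq (Comp (Smul k f) g) (Smul k (Comp f g))"
| comp_smul_right: "mtyp f b c \<Longrightarrow> mtyp g a b \<Longrightarrow> tl0_eq (Comp f (Smul k g)) (Smul k (Comp f g))"
| tens_add_left: "mtyp f a b \<Longrightarrow> mtyp f' a b \<Longrightarrow> mtyp g c d
    \<Longrightarrow> tl0_eq (Tens (Add f f') g) (Add (Tens f g) (Tens f' g))"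
| tens_add_right: "mtyp f a b \<Longrightarrow> mtyp g c d \<Longrightarrow> mtyp g' c d
    \<Longrightarrow> tl0_eq (Tens f (Add g g')) (Add (Tens f g) (Tens f g'))"
| tens_smul_left: "mtyp f a b \<Longrightarrow> mtyp g c d \<Longrightarrow> tl0_eq (Tens (Smul k f) g) (Smul k (Tens f g))"
| tens_smul_right: "mtyp f a b \<Longrightarrow> mtyp g c d \<Longrightarrow> tl0_eq (Tens f (Smul k g)) (Smul k (Tens f g))"
| id_left: "mtyp f a b \<Longrightarrow> tl0_eq (Comp (Id b) f) f"
| id_right: "mtyp f a b \<Longrightarrow> tl0_eq (Comp f (Id a)) f"
| comp_assoc: "mtyp h a b \<Longrightarrow> mtyp g b c \<Longrightarrow> mtyp f c d
    \<Longrightarrow> tl0_eq (Comp (Comp f g) h) (Comp f (Comp g h))"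
| tens_assoc: "mtyp f a b \<Longrightarrow> mtyp g c d \<Longrightarrow> mtyp h e e'
    \<Longrightarrow> tl0_eq (Tens (Tens f g) h) (Tens f (Tens g h))"
| tens_unit_left: "mtyp f a b \<Longrightarrow> tl0_eq (Tens (Id 0) f) f"
| tens_unit_right: "mtyp f a b \<Longrightarrow> tl0_eq (Tens f (Id 0)) f"
| tens_id: "tl0_eq (Tens (Id m) (Id n)) (Id (m + n))"
| interchange: "mtyp f' a b \<Longrightarrow> mtyp f b c \<Longrightarrow> mtyp g' d e \<Longrightarrow> mtyp g e e'
    \<Longrightarrow> tl0_eq (Comp (Tens f g) (Tens f' g')) (Tens (Comp f f') (Comp g g'))"
| rel_zigzag1: "tl0_eq (Comp (Tens (Id 1) Cap) (Tens Cup (Id 1))) (Zero 1 1)"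
| rel_zigzag2: "tl0_eq (Comp (Tens Cap (Id 1)) (Tens (Id 1) Cup)) (Zero 1 1)"
| rel_loop: "tl0_eq (Comp Cap Cup) (Id 0)"

text \<open>Y is a left dual of X (equivalently X is a right dual of Y), witnessed by
  evaluation ev : Y \<otimes> X \<rightarrow> 0 and coevaluation coev : 0 \<rightarrow> X \<otimes> Y satisfying
  the two zigzag (snake) identities.\<close>
definition tl0_left_dual :: "'k::field itself \<Rightarrow> nat \<Rightarrow> nat \<Rightarrow> bool" where
  "tl0_left_dual _ Y X \<longleftrightarrow> (\<exists>(ev :: 'k mor) coev.
      mtyp ev (Y + X) 0 \<and> mtyp coev 0 (X + Y) \<and>
      tl0_eq (Comp (Tens (Id X) ev) (Tens coev (Id X))) (Id X) \<and>
      tl0_eq (Comp (Tens ev (Id Y)) (Tens (Id Y) coev)) (Id Y))"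

definition tl0_rigid :: "'k::field itself \<Rightarrow> bool" where
  "tl0_rigid K \<longleftrightarrow> (\<forall>X. (\<exists>Y. tl0_left_dual K Y X) \<and> (\<exists>Z. tl0_left_dual K X Z))"

end

theory Submission
  imports Defs
begin

(* Represent TL_0 on the tensor powers of a plane V with basis e_True, e_False: cup sends 1 to
   e_True \<otimes> e_False and cap is the functional dual to that vector. Both zigzags vanish (cap
   needs e_True on the left and e_False on the right) and cap \<circ> cup = 1, so the representation
   respects all relations. Cup and cap only insert or delete the word True False, so a nonzero
   matrix entry connects two words with the same image in the bicyclic monoid <p, q | p q = 1>.
   If 1 had a left dual, the snake identity evaluated at e_False would force the coevaluation to
   have a nonzero coefficient at a word starting with False, i.e. with q on the left, and no such
   word maps to 1. *)

fun mdom :: "'k mor \<Rightarrow> nat" and mcod :: "'k mor \<Rightarrow> nat" where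
  "mdom (Id n) = n" | "mdom Cup = 0" | "mdom Cap = 2"
| "mdom (Comp f g) = mdom g" | "mdom (Tens f g) = mdom f + mdom g"
| "mdom (Zero a b) = a" | "mdom (Add f g) = mdom f" | "mdom (Smul c f) = mdom f"
| "mcod (Id n) = n" | "mcod Cup = 2" | "mcod Cap = 0"
| "mcod (Comp f g) = mcod f" | "mcod (Tens f g) = mcod f + mcod g"
| "mcod (Zero a b) = b" | "mcod (Add f g) = mcod f" | "mcod (Smul c f) = mcod f"

lemma mtyp_imp_dom_cod: "mtyp f a b \<Longrightarrow> mdom f = a \<and> mcod f = b"
  by (induction rule: mtyp.induct) auto

lemma tl0_eq_imp_dom_cod_eq: "tl0_eq f g \<Longrightarrow> mdom f = mdom g \<and> mcod f = mcod g"
  by (induction rule: tl0_eq.induct) (auto dest: mtyp_imp_dom_cod)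

definition words :: "nat \<Rightarrow> bool list set" where
  "words n = {w. length w = n}"

lemma finite_words [simp]: "finite (words n)"
  using finite_lists_length_eq[of "UNIV :: bool set" n] by (simp add: words_def)

lemma sum_words_add: "(\<Sum>w\<in>words (m + n). h w) = (\<Sum>x\<in>words m. \<Sum>y\<in>words n. h (x @ y))"
proof -
  have "bij_betw (\<lambda>(x, y). x @ y) (words m \<times> words n) (words (m + n))"
    by (rule bij_betw_byWitness[where f' = "\<lambda>w. (take m w, drop m w)"]) (auto simp: words_def)
  then have "(\<Sum>w\<in>words (m + n). h w) = (\<Sum>(x, y)\<in>words m \<times> words n. h (x @ y))"
    by (simp add: sum.reindex_bij_betw[symmetric] case_prod_beta')
  then show ?thesis
    by (simp add: sum.cartesian_product)
qed

(* Rows and columns are indexed by words; the length test in the Id clause makes the matrix of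
   a well-typed expression vanish outside its type, so that equal morphisms have equal matrices
   as functions. *)
fun mor_matrix :: "'k::comm_ring_1 mor \<Rightarrow> bool list \<Rightarrow> bool list \<Rightarrow> 'k" where
  "mor_matrix (Id n) v u = (if v = u \<and> length u = n then 1 else 0)"
| "mor_matrix Cup v u = (if v = [True, False] \<and> u = [] then 1 else 0)"
| "mor_matrix Cap v u = (if v = [] \<and> u = [True, False] then 1 else 0)"
| "mor_matrix (Comp f g) v u = (\<Sum>w\<in>words (mdom f). mor_matrix f v w * mor_matrix g w u)"
| "mor_matrix (Tens f g) v u =
     mor_matrix f (take (mcod f) v) (take (mdom f) u) * mor_matrix g (drop (mcod f) v) (drop (mdom f) u)"
| "mor_matrix (Zero a b) v u = 0"
| "mor_matrix (Add f g) v u = mor_matrix f v u + mor_matrix g v u"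
| "mor_matrix (Smul c f) v u = c * mor_matrix f v u"

lemma mor_matrix_Comp_nonzeroE:
  assumes "mor_matrix (Comp f g) v u \<noteq> 0"
  obtains w where "mor_matrix f v w \<noteq> 0" and "mor_matrix g w u \<noteq> 0"
proof -
  from assms obtain w where "mor_matrix f v w * mor_matrix g w u \<noteq> 0"
    by (auto elim: sum.not_neutral_contains_not_neutral)
  then show thesis using that mult_not_zero by blast
qed

lemma mor_matrix_nonzero_imp_length:
  "mtyp f a b \<Longrightarrow> mor_matrix f v u \<noteq> 0 \<Longrightarrow> length v = b \<and> length u = a"
proof (induction f a b arbitrary: v u rule: mtyp.induct)
  case (mtyp_Comp g a b f c)
  then obtain w where "mor_matrix f v w \<noteq> 0" "mor_matrix g w u \<noteq> 0"
    by (elim mor_matrix_Comp_nonzeroE)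
  with mtyp_Comp.IH show ?case by blast
next
  case (mtyp_Tens f a b g c d)
  then have "mor_matrix f (take b v) (take a u) \<noteq> 0" and "mor_matrix g (drop b v) (drop a u) \<noteq> 0"
    by (auto dest: mtyp_imp_dom_cod)
  from mtyp_Tens.IH(1)[OF this(1)] mtyp_Tens.IH(2)[OF this(2)] show ?case by auto
next
  case (mtyp_Add f a b g)
  then show ?case by (metis add_0 mor_matrix.simps(7))
qed (auto split: if_splits dest: mult_not_zero)

lemma mor_matrix_comp_id_left:
  assumes "mtyp f a n"
  shows "mor_matrix (Comp (Id n) f) = mor_matrix f"
proof (intro ext)
  fix v u
  have "mor_matrix (Comp (Id n) f) v u = (\<Sum>w\<in>words n. if w = v then mor_matrix f v u else 0)"
    by (auto simp: words_def intro: sum.cong)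
  also have "\<dots> = mor_matrix f v u"
    using mor_matrix_nonzero_imp_length[OF assms, of v u] by (simp add: sum.delta) (auto simp: words_def)
  finally show "mor_matrix (Comp (Id n) f) v u = mor_matrix f v u" .
qed

lemma mor_matrix_comp_id_right:
  assumes "mtyp f n b"
  shows "mor_matrix (Comp f (Id n)) = mor_matrix f"
proof (intro ext)
  fix v u
  have "mor_matrix (Comp f (Id n)) v u = (\<Sum>w\<in>words n. if w = u then mor_matrix f v u else 0)"
    using mtyp_imp_dom_cod[OF assms] by (auto simp: words_def intro: sum.cong)
  also have "\<dots> = mor_matrix f v u"
    using mor_matrix_nonzero_imp_length[OF assms, of v u] by (simp add: sum.delta) (auto simp: words_def)
  finally show "mor_matrix (Comp f (Id n)) v u = mor_matrix f v u" .
qed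

lemma mor_matrix_comp_assoc:
  "mor_matrix (Comp (Comp f g) h) = mor_matrix (Comp f (Comp g h))"
  by (simp add: fun_eq_iff sum_distrib_left sum_distrib_right mult.assoc sum.swap[of _ "words (mdom g)"])

lemma mor_matrix_tens_assoc:
  "mor_matrix (Tens (Tens f g) h) = mor_matrix (Tens f (Tens g h))"
  by (simp add: fun_eq_iff drop_take mult.assoc add.commute)

lemma mor_matrix_tens_unit_left: "mor_matrix (Tens (Id 0) f) = mor_matrix f"
  by (simp add: fun_eq_iff)

lemma mor_matrix_tens_unit_right:
  assumes "mtyp f a b"
  shows "mor_matrix (Tens f (Id 0)) = mor_matrix f"
proof (intro ext)
  fix v u
  show "mor_matrix (Tens f (Id 0)) v u = mor_matrix f v u"
    using mor_matrix_nonzero_imp_length[OF assms, of v u] mtyp_imp_dom_cod[OF assms]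
    by (cases "length v = b \<and> length u = a") auto
qed

lemma mor_matrix_tens_id: "mor_matrix (Tens (Id m) (Id n)) = mor_matrix (Id (m + n))"
  by (auto simp: fun_eq_iff) (metis append_take_drop_id)

lemma mor_matrix_interchange:
  assumes "mcod f' = mdom f"
  shows "mor_matrix (Comp (Tens f g) (Tens f' g')) = mor_matrix (Tens (Comp f f') (Comp g g'))"
proof (intro ext)
  fix v u
  have "mor_matrix (Comp (Tens f g) (Tens f' g')) v u =
    (\<Sum>x\<in>words (mdom f). \<Sum>y\<in>words (mdom g).
      mor_matrix (Tens f g) v (x @ y) * mor_matrix (Tens f' g') (x @ y) u)"
    by (simp add: sum_words_add)
  also have "\<dots> =
    (\<Sum>x\<in>words (mdom f). \<Sum>y\<in>words (mdom g).
      (mor_matrix f (take (mcod f) v) x * mor_matrix f' x (take (mdom f') u)) *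
      (mor_matrix g (drop (mcod f) v) y * mor_matrix g' y (drop (mdom f') u)))"
    using assms by (intro sum.cong refl) (simp_all add: words_def algebra_simps)
  also have "\<dots> = mor_matrix (Tens (Comp f f') (Comp g g')) v u"
    by (simp add: sum_product)
  finally show "mor_matrix (Comp (Tens f g) (Tens f' g')) v u = \<dots>" .
qed

lemma mor_matrix_zigzag1:
  "mor_matrix (Comp (Tens (Id 1) Cap) (Tens Cup (Id 1))) = mor_matrix (Zero 1 1)"
  by (auto simp: fun_eq_iff words_def length_Suc_conv numeral_eq_Suc intro!: sum.neutral)

lemma mor_matrix_zigzag2:
  "mor_matrix (Comp (Tens Cap (Id 1)) (Tens (Id 1) Cup)) = mor_matrix (Zero 1 1)"
  by (auto simp: fun_eq_iff words_def length_Suc_conv numeral_eq_Suc intro!: sum.neutral)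

lemma mor_matrix_loop: "mor_matrix (Comp Cap Cup) = mor_matrix (Id 0)"
proof (intro ext)
  fix v u
  have "mor_matrix (Comp Cap Cup) v u =
    (\<Sum>w\<in>words 2. if w = [True, False] then mor_matrix (Id 0) v u else 0)"
    unfolding mor_matrix.simps(4) mdom.simps by (rule sum.cong) auto
  also have "\<dots> = mor_matrix (Id 0) v u"
    by (simp add: sum.delta) (simp add: words_def)
  finally show "mor_matrix (Comp Cap Cup) v u = mor_matrix (Id 0) v u" .
qed

lemma tl0_eq_imp_mor_matrix_eq: "tl0_eq f g \<Longrightarrow> mor_matrix f = mor_matrix g"
proof (induction rule: tl0_eq.induct)
  case (cong_Comp f f' g g' a b c)
  then show ?case by (simp add: fun_eq_iff tl0_eq_imp_dom_cod_eq)
next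
  case (cong_Tens f f' g g')
  then show ?case by (simp add: fun_eq_iff tl0_eq_imp_dom_cod_eq)
next
  case (comp_add_left f b c f' g a)
  then show ?case by (auto simp: fun_eq_iff sum.distrib algebra_simps dest!: mtyp_imp_dom_cod)
next
  case (tens_add_left f a b f' g c d)
  then show ?case by (auto simp: fun_eq_iff algebra_simps dest!: mtyp_imp_dom_cod)
next
  case (id_left f a b)
  then show ?case by (rule mor_matrix_comp_id_left)
next
  case (id_right f a b)
  then show ?case by (rule mor_matrix_comp_id_right)
next
  case (tens_unit_right f a b)
  then show ?case by (rule mor_matrix_tens_unit_right)
next
  case (interchange f' a b f c g' d e g e')
  then show ?case by (metis mor_matrix_interchange mtyp_imp_dom_cod)
next
  case rel_zigzag1
  show ?case by (rule mor_matrix_zigzag1)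
next
  case rel_zigzag2
  show ?case by (rule mor_matrix_zigzag2)
next
  case rel_loop
  show ?case by (rule mor_matrix_loop)
next
  case (comp_assoc h a b g c f d)
  show ?case by (rule mor_matrix_comp_assoc)
next
  case (tens_assoc f a b g c d h e e')
  show ?case by (rule mor_matrix_tens_assoc)
next
  case (tens_unit_left f a b)
  show ?case by (rule mor_matrix_tens_unit_left)
next
  case (tens_id m n)
  show ?case by (rule mor_matrix_tens_id)
qed (simp_all add: fun_eq_iff distrib_left distrib_right sum.distrib sum_distrib_left mult.assoc mult.left_commute)

fun bicyclic :: "bool list \<Rightarrow> nat \<Rightarrow> nat" where
  "bicyclic [] = id"
| "bicyclic (b # w) = (if b then (\<lambda>n. n - 1) else Suc) \<circ> bicyclic w"

lemma bicyclic_append: "bicyclic (v @ w) = bicyclic v \<circ> bicyclic w"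
  by (induction v) (auto simp: comp_assoc)

lemma bicyclic_True_False: "bicyclic [True, False] = id"
  by (rule ext) simp

lemma bicyclic_False_Cons_neq_id: "bicyclic (False # w) \<noteq> id"
proof
  assume "bicyclic (False # w) = id"
  then have "bicyclic (False # w) 0 = 0" by (simp only: id_apply)
  then show False by simp
qed

lemma mor_matrix_nonzero_imp_bicyclic_eq:
  "mor_matrix f v u \<noteq> 0 \<Longrightarrow> bicyclic v = bicyclic u"
proof (induction f arbitrary: v u)
  case (Comp f g)
  then obtain w where "mor_matrix f v w \<noteq> 0" "mor_matrix g w u \<noteq> 0"
    by (elim mor_matrix_Comp_nonzeroE)
  from Comp.IH(1)[OF this(1)] Comp.IH(2)[OF this(2)] show ?case by simp
next
  case (Tens f g)
  then have "mor_matrix f (take (mcod f) v) (take (mdom f) u) \<noteq> 0"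
    and "mor_matrix g (drop (mcod f) v) (drop (mdom f) u) \<noteq> 0"
    by (metis mor_matrix.simps(5) mult_not_zero)+
  from Tens.IH(1)[OF this(1)] Tens.IH(2)[OF this(2)]
  have "bicyclic (take (mcod f) v) \<circ> bicyclic (drop (mcod f) v) =
      bicyclic (take (mdom f) u) \<circ> bicyclic (drop (mdom f) u)"
    by simp
  then show ?case by (metis append_take_drop_id bicyclic_append)
next
  case (Add f g)
  then show ?case by (metis add_0 mor_matrix.simps(7))
next
  case (Smul c f)
  then show ?case by (metis mor_matrix.simps(8) mult_zero_right)
next
  case Cup
  then show ?case by (simp add: bicyclic_True_False del: bicyclic.simps(2) split: if_splits)
next
  case Cap
  then show ?case by (simp add: bicyclic_True_False del: bicyclic.simps(2) split: if_splits)
qed (simp_all split: if_splits)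

lemma mor_matrix_snake_False:
  assumes "mdom coev = 0" and "mcod coev \<noteq> 0"
  shows "mor_matrix (Comp (Tens (Id 1) ev) (Tens coev (Id 1))) [False] [False] = 0"
proof -
  have "mor_matrix (Tens (Id 1) ev) [False] w * mor_matrix (Tens coev (Id 1)) w [False] = 0" for w
  proof (rule ccontr)
    assume "mor_matrix (Tens (Id 1) ev) [False] w * mor_matrix (Tens coev (Id 1)) w [False] \<noteq> 0"
    then have "take 1 w = [False]"
      and coev: "mor_matrix coev (take (mcod coev) w) [] \<noteq> 0"
      using assms(1) by (auto dest!: mult_not_zero split: if_splits)
    then obtain w' where "w = False # w'"
      by (cases w) auto
    with coev assms(2) have "mor_matrix coev (False # take (mcod coev - 1) w') [] \<noteq> 0"
      by (cases "mcod coev") auto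
    then have "bicyclic (False # take (mcod coev - 1) w') = id"
      using mor_matrix_nonzero_imp_bicyclic_eq by fastforce
    with bicyclic_False_Cons_neq_id show False ..
  qed
  then show ?thesis
    by (simp only: mor_matrix.simps(4) sum.neutral_const)
qed

lemma not_tl0_left_dual_one: "\<not> tl0_left_dual TYPE('k::field) Y 1"
proof
  assume "tl0_left_dual TYPE('k) Y 1"
  then obtain ev coev :: "'k mor" where "mtyp coev 0 (1 + Y)"
    and snake: "tl0_eq (Comp (Tens (Id 1) ev) (Tens coev (Id 1))) (Id 1)"
    unfolding tl0_left_dual_def by blast
  then have "mdom coev = 0" and "mcod coev \<noteq> 0"
    by (auto dest: mtyp_imp_dom_cod)
  then have "0 = mor_matrix (Comp (Tens (Id 1) ev) (Tens coev (Id 1))) [False] [False]"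
    by (rule mor_matrix_snake_False[symmetric])
  also have "\<dots> = mor_matrix (Id 1) [False] [False]"
    by (simp only: tl0_eq_imp_mor_matrix_eq[OF snake])
  also have "\<dots> = 1"
    by simp
  finally show False
    by simp
qed

theorem mainTheorem12:
  shows "\<not> tl0_rigid TYPE('k::field)"
  using not_tl0_left_dual_one unfolding tl0_rigid_def by blast

end
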